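(* Let $V$ be a vertex algebra and let $M$ be a $\mathbb{C}$-subspace of $V$ with $C_2(V)\subseteq M$. Let $a\in V$. Then: (1) $a\in r_{0,-1}(M)$ if and only if $a+C_2(V)\in r(M/C_2(V))$; (2) $a\in sr_{0,-1}(M)$ if and only if $a+C_2(V)\in sr(M/C_2(V))$. Consequently, $M$ is an $MZ_{0,-1}$-subspace of $V$ if and only if $M/C_2(V)$ is a Mathieu-Zhao subspace of the commutative associative algebra $V/C_2(V)$.
   Context: A vertex algebra $(V,Y,\mathbf{1})$ is over $\mathbb{C}$; for $u\in V$ write $Y(u,z)=\sum_{n\in\mathbb{Z}}u_nz^{-n-1}$ with $u_n\in\operatorname{End}V$. Iterated products are nested to the right: $v_{n_1}v_{n_2}\cdots v_{n_t}v=v_{n_1}(v_{n_2}(\cdots(v_{n_t}v)))$. $C_2(V)=\operatorname{span}_{\mathbb{C}}\{u_{-2}v: u,v\in V\}$. The quotient $V/C_2(V)$ is a commutative associative unital algebra with product $(a+C_2(V))(b+C_2(V))=a_{-1}b+C_2(V)$ and identity $\mathbf{1}+C_2(V)$. For a subspace $M\subseteq V$: $r_{0,-1}(M)$ is the set of $v\in V$ for which there is $m\ge 0$ with $v_{n_1}\cdots v_{n_t}v\in M$ for all $t\ge m$ and all $n_1,\dots,n_t\in\{0,-1\}$. $lsr_{0,-1}(M)$ is the set of $v\in V$ such that for every $b\in V$ there is $m\ge0$ with $b_sv_{n_1}\cdots v_{n_t}v\in M$ for all $t\ge m$ and all $s,n_1,\dots,n_t\in\{0,-1\}$. $rsr_{0,-1}(M)$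 is the set of $v\in V$ such that for every $w\in V$ there is $m\ge 0$ with $(v_{n_1}\cdots v_{n_t}v)_nw\in M$ for all $t\ge m$ and all $n,n_1,\dots,n_t\in\{0,-1\}$. $sr_{0,-1}(M)=lsr_{0,-1}(M)\cap rsr_{0,-1}(M)$. $M$ is an $MZ_{0,-1}$-subspace of $V$ if $r_{0,-1}(M)=sr_{0,-1}(M)$. For a commutative associative unital algebra $A$ and a subspace $U$: $r(U)=\{a\in A:\exists m\ge1,\ a^t\in U\ \forall t\ge m\}$, $sr(U)=\{a\in A:\forall b,c\in A\ \exists m\ge 1,\ ba^tc\in U\ \forall t\ge m\}$; $U$ is a Mathieu-Zhao subspace of $A$ if $r(U)=sr(U)$. *)

theory Defs
  imports Complex_Main
begin

(* A vertex algebra over C is represented by: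
   - a type 'v with additive group structure and a scalar multiplication
     scale :: complex => 'v => 'v making it a C-vector space;
   - the modes  mode u n v = u_n v  (so Y(u,z) = sum_n u_n z^(-n-1));
   - the vacuum vector vac = 1. *)

definition fsum :: "(nat \<Rightarrow> 'v::comm_monoid_add) \<Rightarrow> 'v" where
  "fsum f = sum f {i. f i \<noteq> 0}"

definition int_sign :: "int \<Rightarrow> complex" where
  "int_sign n = (if even n then 1 else -1)"

definition is_vertex_algebra ::
  "(complex \<Rightarrow> 'v::ab_group_add \<Rightarrow> 'v) \<Rightarrow> ('v \<Rightarrow> int \<Rightarrow> 'v \<Rightarrow> 'v) \<Rightarrow> 'v \<Rightarrow> bool" where
  "is_vertex_algebra scale mode vac \<longleftrightarrow>
     vector_space scale \<and>
     \<comment> \<open>Y is linear: bilinearity of (u,v) |-> u_n v\<close>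
     (\<forall>n v. module_hom scale scale (\<lambda>u. mode u n v)) \<and>
     (\<forall>u n. module_hom scale scale (\<lambda>v. mode u n v)) \<and>
     \<comment> \<open>truncation: u_n v = 0 for n sufficiently large\<close>
     (\<forall>u v. \<exists>N. \<forall>n\<ge>N. mode u n v = 0) \<and>
     \<comment> \<open>vacuum: Y(1,z) = id\<close>
     (\<forall>v n. mode vac n v = (if n = -1 then v else 0)) \<and>
     \<comment> \<open>creation: Y(u,z)1 in V[[z]] with constant term u\<close>
     (\<forall>u n. n \<ge> 0 \<longrightarrow> mode u n vac = 0) \<and>
     (\<forall>u. mode u (-1) vac = u) \<and>
     \<comment> \<open>Jacobi identity, in its component form (Borcherds identity)\<close>
     (\<forall>u v w m n k.
        fsum (\<lambda>i. scale ((of_int m) gchoose i)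
                        (mode (mode u (n + int i) v) (m + k - int i) w))
      = fsum (\<lambda>i. scale ((-1) ^ i * ((of_int n) gchoose i))
                        (mode u (m + n - int i) (mode v (k + int i) w)
                         - scale (int_sign n) (mode v (n + k - int i) (mode u (m + int i) w)))))"

definition C2 :: "(complex \<Rightarrow> 'v::ab_group_add \<Rightarrow> 'v) \<Rightarrow> ('v \<Rightarrow> int \<Rightarrow> 'v \<Rightarrow> 'v) \<Rightarrow> 'v set" where
  "C2 scale mode = module.span scale {mode u (-2) v | u v. True}"

definition iter_mode :: "('v \<Rightarrow> int \<Rightarrow> 'v \<Rightarrow> 'v) \<Rightarrow> 'v \<Rightarrow> int list \<Rightarrow> 'v \<Rightarrow> 'v" where
  "iter_mode mode v ns w = foldr (\<lambda>n x. mode v n x) ns w"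

definition r01 :: "('v \<Rightarrow> int \<Rightarrow> 'v \<Rightarrow> 'v) \<Rightarrow> 'v set \<Rightarrow> 'v set" where
  "r01 mode M = {v. \<exists>m::nat. \<forall>ns. length ns \<ge> m \<and> set ns \<subseteq> {0, -1} \<longrightarrow>
                     iter_mode mode v ns v \<in> M}"

definition lsr01 :: "('v \<Rightarrow> int \<Rightarrow> 'v \<Rightarrow> 'v) \<Rightarrow> 'v set \<Rightarrow> 'v set" where
  "lsr01 mode M = {v. \<forall>b. \<exists>m::nat. \<forall>s ns. s \<in> {0, -1} \<and> length ns \<ge> m \<and> set ns \<subseteq> {0, -1} \<longrightarrow>
                     mode b s (iter_mode mode v ns v) \<in> M}"

definition rsr01 :: "('v \<Rightarrow> int \<Rightarrow> 'v \<Rightarrow> 'v) \<Rightarrow> 'v set \<Rightarrow> 'v set" where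
  "rsr01 mode M = {v. \<forall>w. \<exists>m::nat. \<forall>n ns. n \<in> {0, -1} \<and> length ns \<ge> m \<and> set ns \<subseteq> {0, -1} \<longrightarrow>
                     mode (iter_mode mode v ns v) n w \<in> M}"

definition sr01 :: "('v \<Rightarrow> int \<Rightarrow> 'v \<Rightarrow> 'v) \<Rightarrow> 'v set \<Rightarrow> 'v set" where
  "sr01 mode M = lsr01 mode M \<inter> rsr01 mode M"

definition MZ01_subspace :: "('v \<Rightarrow> int \<Rightarrow> 'v \<Rightarrow> 'v) \<Rightarrow> 'v set \<Rightarrow> bool" where
  "MZ01_subspace mode M \<longleftrightarrow> r01 mode M = sr01 mode M"

(* Commutative associative unital algebra given by carrier A, product mul, unit e *)
definition alg_pow :: "('a \<Rightarrow> 'a \<Rightarrow> 'a) \<Rightarrow> 'a \<Rightarrow> 'a \<Rightarrow> nat \<Rightarrow> 'a" where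
  "alg_pow mul e a t = (mul a ^^ t) e"

definition alg_r :: "'a set \<Rightarrow> ('a \<Rightarrow> 'a \<Rightarrow> 'a) \<Rightarrow> 'a \<Rightarrow> 'a set \<Rightarrow> 'a set" where
  "alg_r A mul e U = {a \<in> A. \<exists>m\<ge>1. \<forall>t\<ge>m. alg_pow mul e a t \<in> U}"

definition alg_sr :: "'a set \<Rightarrow> ('a \<Rightarrow> 'a \<Rightarrow> 'a) \<Rightarrow> 'a \<Rightarrow> 'a set \<Rightarrow> 'a set" where
  "alg_sr A mul e U = {a \<in> A. \<forall>b\<in>A. \<forall>c\<in>A. \<exists>m\<ge>1. \<forall>t\<ge>m. mul (mul b (alg_pow mul e a t)) c \<in> U}"

definition MZ_subspace :: "'a set \<Rightarrow> ('a \<Rightarrow> 'a \<Rightarrow> 'a) \<Rightarrow> 'a \<Rightarrow> 'a set \<Rightarrow> bool" where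
  "MZ_subspace A mul e U \<longleftrightarrow> alg_r A mul e U = alg_sr A mul e U"

definition coset :: "'v::ab_group_add set \<Rightarrow> 'v \<Rightarrow> 'v set" where
  "coset C a = (\<lambda>c. a + c) ` C"

definition quot :: "'v::ab_group_add set \<Rightarrow> 'v set set" where
  "quot C = range (coset C)"

(* product (a + C)(b + C) = a_{-1} b + C, via representatives *)
definition quot_mul :: "('v::ab_group_add \<Rightarrow> int \<Rightarrow> 'v \<Rightarrow> 'v) \<Rightarrow> 'v set \<Rightarrow> 'v set \<Rightarrow> 'v set \<Rightarrow> 'v set" where
  "quot_mul mode C X Y =
     coset C (mode (SOME a. X = coset C a) (-1) (SOME b. Y = coset C b))"

end

theory Submission
  imports Defs
begin

(* Modulo C_2(V), every identity needed is an instance of the Borcherds identity in which all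
   summands but one lie in C_2(V), since u_n w is in C_2(V) for n <= -2.  They show that C_2(V)
   is stable under the modes u_n with n <= 0 on either side, that the (-1)-product is commutative
   and associative and the 0-product skew modulo C_2(V) (so a_0 a is in C_2(V)), and that b_0 is a
   derivation.  Hence an iterated product a_{n_1}...a_{n_t} a with all n_i in {0,-1} lies in
   C_2(V) once some n_i = 0, and otherwise represents the power a^{t+1} in V/C_2(V); as C_2(V) is
   contained in M, the conditions defining r_{0,-1}(M) and sr_{0,-1}(M) become conditions on
   powers.  The left conditions with s = 0 reduce to s = -1 through b_0 a^{t+1} = (t+1) (b_0 a) a^t
   modulo C_2(V), and the right conditions follow from the left ones by skew symmetry. *)

lemma fsum_eq_single:
  assumes "\<And>i. i \<noteq> j \<Longrightarrow> f i = 0"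
  shows "fsum f = f j"
proof -
  have "{i. f i \<noteq> 0} \<subseteq> {j}" using assms by blast
  then show ?thesis
    unfolding fsum_def by (cases "f j = 0") (auto simp: subset_singleton_iff)
qed

lemma fsum_eq_sum_lessThan:
  assumes "\<And>i. i \<ge> N \<Longrightarrow> f i = 0"
  shows "fsum f = sum f {..<N}"
proof -
  have "{i. f i \<noteq> 0} \<subseteq> {..<N}" using assms not_less by blast
  then show ?thesis unfolding fsum_def by (intro sum.mono_neutral_left) auto
qed

lemma eventually_sequentially_ge_1:
  "eventually P sequentially \<longleftrightarrow> (\<exists>N\<ge>1. \<forall>n\<ge>N. P n)"
proof
  assume "eventually P sequentially"
  then obtain N where "\<forall>n\<ge>N. P n" by (auto simp: eventually_sequentially)
  then show "\<exists>N\<ge>1. \<forall>n\<ge>N. P n" by (intro exI[of _ "Suc N"]) auto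
qed (auto simp: eventually_sequentially)

context module
begin

lemma coset_eq_iff:
  assumes "subspace C"
  shows "coset C x = coset C y \<longleftrightarrow> x - y \<in> C"
proof
  assume "coset C x = coset C y"
  moreover have "x \<in> coset C x"
    using subspace_0[OF assms] unfolding coset_def by (auto intro: image_eqI[of _ _ 0])
  ultimately show "x - y \<in> C" unfolding coset_def by auto
next
  assume xy: "x - y \<in> C"
  have "coset C x = (\<lambda>c. y + c) ` ((\<lambda>c. (x - y) + c) ` C)"
    unfolding coset_def image_image by (simp add: algebra_simps)
  also have "(\<lambda>c. (x - y) + c) ` C = C"
  proof (intro equalityI subsetI)
    fix c assume "c \<in> C"
    then have "- (x - y) + c \<in> C" using subspace_add subspace_neg assms xy by blast
    then show "c \<in> (\<lambda>c. (x - y) + c) ` C" by (auto intro: image_eqI[of _ _ "- (x - y) + c"])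
  qed (use subspace_add assms xy in blast)
  finally show "coset C x = coset C y" unfolding coset_def .
qed

lemma coset_add_cong:
  assumes "subspace C" "coset C x = coset C x'" "coset C y = coset C y'"
  shows "coset C (x + y) = coset C (x' + y')"
proof -
  have "(x - x') + (y - y') \<in> C"
    using assms by (simp add: coset_eq_iff subspace_add)
  then show ?thesis using assms(1) by (simp add: coset_eq_iff algebra_simps)
qed

lemma coset_scale_cong:
  assumes "subspace C" "coset C x = coset C y"
  shows "coset C (scale c x) = coset C (scale c y)"
  using assms subspace_scale[of C "x - y" c] by (simp add: coset_eq_iff scale_right_diff_distrib)

lemma coset_fsum_eq:
  assumes "subspace C" "\<And>i. i \<noteq> j \<Longrightarrow> f i \<in> C" and "\<forall>\<^sub>F i in sequentially. f i = 0"
  shows "coset C (fsum f) = coset C (f j)"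
proof -
  obtain N where "\<And>i. i \<ge> N \<Longrightarrow> f i = 0"
    using assms(3) by (auto simp: eventually_sequentially)
  then have N: "\<And>i. i \<ge> max N (Suc j) \<Longrightarrow> f i = 0" by simp
  have "fsum f = sum f {..<max N (Suc j)}" by (rule fsum_eq_sum_lessThan) (rule N)
  also have "\<dots> = f j + sum f ({..<max N (Suc j)} - {j})" by (rule sum.remove) auto
  finally have "fsum f - f j = sum f ({..<max N (Suc j)} - {j})" by simp
  also have "\<dots> \<in> C" using assms(1,2) by (intro subspace_sum) auto
  finally show ?thesis using assms(1) by (simp add: coset_eq_iff)
qed

lemma coset_eq_mem:
  assumes "subspace C" "subspace M" "C \<subseteq> M" "coset C x = coset C y" "y \<in> M"
  shows "x \<in> M"
proof -
  have "x - y \<in> M" using assms by (auto simp: coset_eq_iff)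
  then have "(x - y) + y \<in> M" using assms(2,5) subspace_add by blast
  then show ?thesis by simp
qed

lemma coset_mem_image_iff:
  assumes "subspace C" "subspace M" "C \<subseteq> M"
  shows "coset C x \<in> coset C ` M \<longleftrightarrow> x \<in> M"
  using coset_eq_mem[OF assms] by auto

end

lemma gbinomial_minus_two: "((-2::'a::field_char_0) gchoose i) = (-1) ^ i * (of_nat i + 1)"
proof -
  have "((-2::'a) gchoose i) = (-1) ^ i * (of_nat (Suc i) gchoose i)"
    using gbinomial_minus[of "2::'a" i] by (simp add: add.commute)
  also have "(of_nat (Suc i) gchoose i :: 'a) = of_nat (Suc i)"
    by (metis binomial_gbinomial binomial_Suc_n)
  finally show ?thesis by simp
qed

locale vertex_algebra =
  fixes scale :: "complex \<Rightarrow> 'v::ab_group_add \<Rightarrow> 'v"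
    and mode :: "'v \<Rightarrow> int \<Rightarrow> 'v \<Rightarrow> 'v"
    and vac :: 'v
  assumes is_vertex_algebra: "is_vertex_algebra scale mode vac"
begin

sublocale module scale
  using is_vertex_algebra by (simp add: is_vertex_algebra_def module_iff_vector_space)

lemma mode_hom_left: "module_hom scale scale (\<lambda>u. mode u n v)"
  and mode_hom_right: "module_hom scale scale (\<lambda>v. mode u n v)"
  and vac_mode: "mode vac n v = (if n = -1 then v else 0)"
  and mode_vac_nonneg: "n \<ge> 0 \<Longrightarrow> mode u n vac = 0"
  and mode_minus_one_vac [simp]: "mode u (-1) vac = u"
  using is_vertex_algebra by (simp_all add: is_vertex_algebra_def)

lemma mode_diff_left: "mode (x - y) n w = mode x n w - mode y n w"
  and mode_zero_left [simp]: "mode 0 n w = 0"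
  using module_hom.diff[OF mode_hom_left] module_hom.zero[OF mode_hom_left] by metis+

lemma mode_diff_right: "mode u n (x - y) = mode u n x - mode u n y"
  and mode_scale_right: "mode u n (scale c x) = scale c (mode u n x)"
  and mode_zero_right [simp]: "mode u n 0 = 0"
  using module_hom.diff[OF mode_hom_right] module_hom.scale[OF mode_hom_right]
    module_hom.zero[OF mode_hom_right] by metis+

lemma eventually_mode_eq_0: "\<forall>\<^sub>F i in sequentially. mode u (n + int i) v = 0"
proof -
  have "\<exists>N. \<forall>k\<ge>N. mode u k v = 0"
    using is_vertex_algebra by (simp add: is_vertex_algebra_def)
  then obtain N where "\<forall>k\<ge>N. mode u k v = 0" ..
  then show ?thesis
    unfolding eventually_sequentially by (intro exI[of _ "nat (N - n)"]) auto
qed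

definition borcherds_lhs :: "int \<Rightarrow> 'v \<Rightarrow> int \<Rightarrow> 'v \<Rightarrow> int \<Rightarrow> 'v \<Rightarrow> nat \<Rightarrow> 'v" where
  "borcherds_lhs m u n v k w i =
     scale (of_int m gchoose i) (mode (mode u (n + int i) v) (m + k - int i) w)"

definition borcherds_rhs :: "int \<Rightarrow> 'v \<Rightarrow> int \<Rightarrow> 'v \<Rightarrow> int \<Rightarrow> 'v \<Rightarrow> nat \<Rightarrow> 'v" where
  "borcherds_rhs m u n v k w i =
     scale ((-1) ^ i * (of_int n gchoose i))
       (mode u (m + n - int i) (mode v (k + int i) w)
        - scale (int_sign n) (mode v (n + k - int i) (mode u (m + int i) w)))"

lemma borcherds: "fsum (borcherds_lhs m u n v k w) = fsum (borcherds_rhs m u n v k w)"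
  using is_vertex_algebra
  unfolding is_vertex_algebra_def borcherds_lhs_def borcherds_rhs_def by blast

lemma eventually_borcherds_lhs_eq_0: "\<forall>\<^sub>F i in sequentially. borcherds_lhs m u n v k w i = 0"
  using eventually_mode_eq_0[of u n v] by eventually_elim (simp add: borcherds_lhs_def)

lemma eventually_borcherds_rhs_eq_0: "\<forall>\<^sub>F i in sequentially. borcherds_rhs m u n v k w i = 0"
  using eventually_mode_eq_0[of v k w] eventually_mode_eq_0[of u m w]
  by eventually_elim (simp add: borcherds_rhs_def)

lemma borcherds_single:
  assumes "\<And>i. i \<noteq> j \<Longrightarrow> borcherds_lhs m u n v k w i = 0"
    and "\<And>i. i \<noteq> j' \<Longrightarrow> borcherds_rhs m u n v k w i = 0"
  shows "borcherds_lhs m u n v k w j = borcherds_rhs m u n v k w j'"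
  using borcherds fsum_eq_single assms by metis

(* u_{-2} 1 is the translate D u, and this is the rule (D u)_n = -n u_{n-1}. *)
lemma mode_translation:
  assumes "n \<le> -1"
  shows "mode (mode u (-2) vac) n w = scale (- of_int n) (mode u (n - 1) w)"
proof -
  define j where "j = nat (-1 - n)"
  have n: "n = -1 - int j" using assms by (simp add: j_def)
  have "borcherds_lhs 0 u (-2) vac n w 0 = borcherds_rhs 0 u (-2) vac n w j"
    by (rule borcherds_single)
      (auto simp: borcherds_lhs_def borcherds_rhs_def vac_mode gbinomial_0_left n)
  then have "mode (mode u (-2) vac) n w = scale (of_nat j + 1) (mode u (-2 - int j) w)"
    by (simp add: borcherds_lhs_def borcherds_rhs_def vac_mode gbinomial_minus_two n)
  moreover have "n - 1 = -2 - int j" "- of_int n = (of_nat j + 1 :: complex)"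
    by (simp_all add: n)
  ultimately show ?thesis by (simp only:)
qed

abbreviation C\<^sub>2 :: "'v set" where "C\<^sub>2 \<equiv> C2 scale mode"

lemma subspace_C2: "subspace C\<^sub>2"
  unfolding C2_def by simp

lemma mode_minus_two_in_C2: "mode u (-2) v \<in> C\<^sub>2"
  unfolding C2_def by (rule span_base) blast

lemma hom_image_in_C2:
  assumes "module_hom scale scale f" "\<And>u v. f (mode u (-2) v) \<in> C\<^sub>2" "x \<in> C\<^sub>2"
  shows "f x \<in> C\<^sub>2"
proof -
  have "span {mode u (-2) v | u v. True} \<subseteq> f -` C\<^sub>2"
    using assms(2) module_hom.subspace_vimage[OF assms(1) subspace_C2] by (intro span_minimal) auto
  with assms(3) show ?thesis unfolding C2_def by blast
qed

lemma borcherds_mod_C2: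
  assumes "\<And>i. i \<noteq> j \<Longrightarrow> borcherds_lhs m u n v k w i \<in> C\<^sub>2"
    and "\<And>i. i \<noteq> j' \<Longrightarrow> borcherds_rhs m u n v k w i \<in> C\<^sub>2"
  shows "coset C\<^sub>2 (borcherds_lhs m u n v k w j) = coset C\<^sub>2 (borcherds_rhs m u n v k w j')"
proof -
  have "coset C\<^sub>2 (borcherds_lhs m u n v k w j) = coset C\<^sub>2 (fsum (borcherds_lhs m u n v k w))"
    using assms(1) by (intro coset_fsum_eq[symmetric] subspace_C2 eventually_borcherds_lhs_eq_0)
  also have "\<dots> = coset C\<^sub>2 (borcherds_rhs m u n v k w j')"
    using assms(2) unfolding borcherds
    by (intro coset_fsum_eq subspace_C2 eventually_borcherds_rhs_eq_0)
  finally show ?thesis .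
qed

lemma mode_in_C2_of_le_minus_two:
  assumes "n \<le> -2"
  shows "mode u n w \<in> C\<^sub>2"
proof -
  have "mode u (-2 - int d) w \<in> C\<^sub>2" for d u
  proof (induction d arbitrary: u)
    case 0
    show ?case using mode_minus_two_in_C2 by simp
  next
    case (Suc d)
    have "-2 - int d - 1 = -2 - int (Suc d)" "- of_int (-2 - int d) = (of_nat d + 2 :: complex)"
      by simp_all
    then have "mode (mode u (-2) vac) (-2 - int d) w
        = scale (of_nat d + 2) (mode u (-2 - int (Suc d)) w)"
      using mode_translation[of "-2 - int d" u w] by simp
    moreover have "(of_nat d + 2 :: complex) \<noteq> 0"
      by (metis of_nat_add of_nat_numeral of_nat_eq_0_iff add_is_0 zero_neq_numeral)
    ultimately have "mode u (-2 - int (Suc d)) w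
        = scale (1 / (of_nat d + 2)) (mode (mode u (-2) vac) (-2 - int d) w)"
      by simp
    then show ?case using Suc.IH subspace_scale[OF subspace_C2] by simp
  qed
  from this[where d = "nat (-2 - n)"] show ?thesis using assms by simp
qed

lemma mode_right_in_C2:
  assumes "n \<le> 0" "x \<in> C\<^sub>2"
  shows "mode u n x \<in> C\<^sub>2"
proof (rule hom_image_in_C2[OF mode_hom_right _ assms(2)])
  fix y z
  have lhs: "borcherds_lhs n u 0 y (-2) z i \<in> C\<^sub>2" for i
    using assms(1) unfolding borcherds_lhs_def
    by (intro subspace_scale[OF subspace_C2] mode_in_C2_of_le_minus_two) simp
  have "coset C\<^sub>2 (borcherds_rhs n u 0 y (-2) z 0) = coset C\<^sub>2 (borcherds_lhs n u 0 y (-2) z 0)"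
    using lhs by (intro borcherds_mod_C2[symmetric])
      (simp_all add: borcherds_rhs_def gbinomial_0_left subspace_0[OF subspace_C2])
  then have "borcherds_rhs n u 0 y (-2) z 0 \<in> C\<^sub>2"
    using lhs coset_eq_mem[OF subspace_C2 subspace_C2 order_refl] by blast
  then have "(mode u n (mode y (-2) z) - mode y (-2) (mode u n z)) + mode y (-2) (mode u n z) \<in> C\<^sub>2"
    by (intro subspace_add[OF subspace_C2] mode_minus_two_in_C2)
      (simp add: borcherds_rhs_def int_sign_def)
  then show "mode u n (mode y (-2) z) \<in> C\<^sub>2" by simp
qed

lemma mode_left_in_C2:
  assumes "n \<le> 0" "x \<in> C\<^sub>2"
  shows "mode x n w \<in> C\<^sub>2"
proof (rule hom_image_in_C2[OF mode_hom_left _ assms(2)])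
  fix u v
  have rhs: "borcherds_rhs 0 u (-2) v n w i \<in> C\<^sub>2" for i
    using assms(1) unfolding borcherds_rhs_def
    by (intro subspace_scale[OF subspace_C2] subspace_diff[OF subspace_C2]
        mode_in_C2_of_le_minus_two) simp_all
  have "coset C\<^sub>2 (borcherds_lhs 0 u (-2) v n w 0) = coset C\<^sub>2 (borcherds_rhs 0 u (-2) v n w 0)"
    using rhs by (intro borcherds_mod_C2)
      (simp_all add: borcherds_lhs_def gbinomial_0_left subspace_0[OF subspace_C2])
  then show "mode (mode u (-2) v) n w \<in> C\<^sub>2"
    using rhs coset_eq_mem[OF subspace_C2 subspace_C2 order_refl] by (simp add: borcherds_lhs_def)
qed

lemma coset_mode_right_cong:
  assumes "n \<le> 0" "coset C\<^sub>2 x = coset C\<^sub>2 y"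
  shows "coset C\<^sub>2 (mode u n x) = coset C\<^sub>2 (mode u n y)"
  using assms mode_right_in_C2[of n "x - y" u]
  by (simp add: coset_eq_iff subspace_C2 mode_diff_right)

lemma coset_mode_left_cong:
  assumes "n \<le> 0" "coset C\<^sub>2 x = coset C\<^sub>2 y"
  shows "coset C\<^sub>2 (mode x n w) = coset C\<^sub>2 (mode y n w)"
  using assms mode_left_in_C2[of n "x - y" w]
  by (simp add: coset_eq_iff subspace_C2 mode_diff_left)

lemma coset_mode_minus_one_commute: "coset C\<^sub>2 (mode u (-1) v) = coset C\<^sub>2 (mode v (-1) u)"
proof -
  have "coset C\<^sub>2 (borcherds_lhs (-1) u (-1) v 0 vac 0)
      = coset C\<^sub>2 (borcherds_rhs (-1) u (-1) v 0 vac 0)"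
    by (rule borcherds_mod_C2)
      (auto simp: borcherds_lhs_def borcherds_rhs_def mode_vac_nonneg subspace_0[OF subspace_C2]
        intro!: subspace_scale[OF subspace_C2] mode_in_C2_of_le_minus_two)
  then show ?thesis by (simp add: borcherds_lhs_def borcherds_rhs_def mode_vac_nonneg int_sign_def)
qed

lemma coset_mode_zero_skew: "coset C\<^sub>2 (mode u 0 v) = coset C\<^sub>2 (- mode v 0 u)"
proof -
  have "coset C\<^sub>2 (borcherds_lhs (-1) u 0 v 0 vac 0) = coset C\<^sub>2 (borcherds_rhs (-1) u 0 v 0 vac 0)"
    by (rule borcherds_mod_C2)
      (auto simp: borcherds_lhs_def borcherds_rhs_def gbinomial_0_left subspace_0[OF subspace_C2]
        intro!: subspace_scale[OF subspace_C2] mode_in_C2_of_le_minus_two)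
  then show ?thesis by (simp add: borcherds_lhs_def borcherds_rhs_def mode_vac_nonneg int_sign_def)
qed

lemma coset_mode_minus_one_assoc:
  "coset C\<^sub>2 (mode (mode u (-1) v) (-1) w) = coset C\<^sub>2 (mode u (-1) (mode v (-1) w))"
proof -
  have "coset C\<^sub>2 (borcherds_lhs 0 u (-1) v (-1) w 0) = coset C\<^sub>2 (borcherds_rhs 0 u (-1) v (-1) w 0)"
    by (rule borcherds_mod_C2)
      (auto simp: borcherds_lhs_def borcherds_rhs_def gbinomial_0_left subspace_0[OF subspace_C2]
        intro!: subspace_scale[OF subspace_C2] subspace_diff[OF subspace_C2]
          mode_in_C2_of_le_minus_two)
  also have "\<dots> = coset C\<^sub>2 (mode u (-1) (mode v (-1) w))"
    using mode_minus_two_in_C2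
    by (simp add: borcherds_rhs_def int_sign_def coset_eq_iff subspace_C2)
  finally show ?thesis by (simp add: borcherds_lhs_def)
qed

lemma mode_zero_derivation:
  "mode a 0 (mode u (-1) v) = mode (mode a 0 u) (-1) v + mode u (-1) (mode a 0 v)"
proof -
  have "borcherds_lhs 0 a 0 u (-1) v 0 = borcherds_rhs 0 a 0 u (-1) v 0"
    by (rule borcherds_single) (simp_all add: borcherds_lhs_def borcherds_rhs_def gbinomial_0_left)
  then show ?thesis by (simp add: borcherds_lhs_def borcherds_rhs_def int_sign_def)
qed

lemma coset_mode_minus_one_left_commute:
  "coset C\<^sub>2 (mode a (-1) (mode x (-1) y)) = coset C\<^sub>2 (mode x (-1) (mode a (-1) y))"
proof -
  have "coset C\<^sub>2 (mode a (-1) (mode x (-1) y)) = coset C\<^sub>2 (mode (mode a (-1) x) (-1) y)"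
    by (rule coset_mode_minus_one_assoc[symmetric])
  also have "\<dots> = coset C\<^sub>2 (mode (mode x (-1) a) (-1) y)"
    by (rule coset_mode_left_cong[OF _ coset_mode_minus_one_commute]) simp
  also have "\<dots> = coset C\<^sub>2 (mode x (-1) (mode a (-1) y))"
    by (rule coset_mode_minus_one_assoc)
  finally show ?thesis .
qed

lemma coset_mode_minus_one_right_commute:
  "coset C\<^sub>2 (mode (mode b (-1) x) (-1) c) = coset C\<^sub>2 (mode (mode b (-1) c) (-1) x)"
proof -
  have "coset C\<^sub>2 (mode (mode b (-1) x) (-1) c) = coset C\<^sub>2 (mode b (-1) (mode x (-1) c))"
    by (rule coset_mode_minus_one_assoc)
  also have "\<dots> = coset C\<^sub>2 (mode b (-1) (mode c (-1) x))"
    by (rule coset_mode_right_cong[OF _ coset_mode_minus_one_commute]) simp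
  also have "\<dots> = coset C\<^sub>2 (mode (mode b (-1) c) (-1) x)"
    by (rule coset_mode_minus_one_assoc[symmetric])
  finally show ?thesis .
qed

lemma quot_mul_coset: "quot_mul mode C\<^sub>2 (coset C\<^sub>2 x) (coset C\<^sub>2 y) = coset C\<^sub>2 (mode x (-1) y)"
proof -
  define x' where "x' = (SOME x'. coset C\<^sub>2 x = coset C\<^sub>2 x')"
  define y' where "y' = (SOME y'. coset C\<^sub>2 y = coset C\<^sub>2 y')"
  have "coset C\<^sub>2 x = coset C\<^sub>2 x'" unfolding x'_def by (rule someI[of _ x]) (rule refl)
  moreover have "coset C\<^sub>2 y = coset C\<^sub>2 y'" unfolding y'_def by (rule someI[of _ y]) (rule refl)
  ultimately have "coset C\<^sub>2 (mode x' (-1) y') = coset C\<^sub>2 (mode x (-1) y)"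
    using coset_mode_left_cong[of "-1" x' x y'] coset_mode_right_cong[of "-1" y' y x] by simp
  then show ?thesis unfolding quot_mul_def x'_def y'_def .
qed

definition vpow :: "'v \<Rightarrow> nat \<Rightarrow> 'v" where
  "vpow a t = (mode a (-1) ^^ t) vac"

lemma vpow_0 [simp]: "vpow a 0 = vac"
  and vpow_Suc [simp]: "vpow a (Suc t) = mode a (-1) (vpow a t)"
  by (simp_all add: vpow_def)

lemma alg_pow_coset:
  "alg_pow (quot_mul mode C\<^sub>2) (coset C\<^sub>2 vac) (coset C\<^sub>2 a) t = coset C\<^sub>2 (vpow a t)"
  by (induction t) (simp_all add: alg_pow_def quot_mul_coset)

lemma mode_zero_self_in_C2: "mode a 0 a \<in> C\<^sub>2"
proof -
  have "mode a 0 a + mode a 0 a \<in> C\<^sub>2"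
    using coset_mode_zero_skew[of a a] by (simp add: coset_eq_iff subspace_C2)
  then have "scale (1/2) (mode a 0 a + mode a 0 a) \<in> C\<^sub>2"
    by (rule subspace_scale[OF subspace_C2])
  then show ?thesis by (simp add: scale_right_distrib flip: scale_left_distrib)
qed

lemma mode_zero_vpow_in_C2: "mode a 0 (vpow a (Suc t)) \<in> C\<^sub>2"
proof (induction t)
  case 0
  then show ?case using mode_zero_self_in_C2 by simp
next
  case (Suc t)
  have "mode (mode a 0 a) (-1) (vpow a (Suc t)) + mode a (-1) (mode a 0 (vpow a (Suc t))) \<in> C\<^sub>2"
    by (intro subspace_add[OF subspace_C2] mode_left_in_C2[OF _ mode_zero_self_in_C2]
        mode_right_in_C2[OF _ Suc.IH]) simp_all
  then show ?case by (simp only: vpow_Suc[of a "Suc t"] mode_zero_derivation)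
qed

lemma iter_mode_replicate: "iter_mode mode a (replicate t (-1)) a = vpow a (Suc t)"
  by (induction t) (simp_all add: iter_mode_def)

lemma iter_mode_in_C2:
  assumes "set ns \<subseteq> {0, -1}" "0 \<in> set ns"
  shows "iter_mode mode a ns a \<in> C\<^sub>2"
  using assms
proof (induction ns)
  case Nil
  then show ?case by simp
next
  case (Cons n ns)
  have iter: "iter_mode mode a (n # ns) a = mode a n (iter_mode mode a ns a)"
    by (simp add: iter_mode_def)
  show ?case
  proof (cases "0 \<in> set ns")
    case True
    with Cons have "mode a n (iter_mode mode a ns a) \<in> C\<^sub>2" by (intro mode_right_in_C2) auto
    then show ?thesis using iter by simp
  next
    case False
    with Cons.prems have "n = 0" "replicate (length ns) (-1) = ns"
      by (auto intro!: replicate_length_same)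
    then show ?thesis using iter iter_mode_replicate mode_zero_vpow_in_C2 by metis
  qed
qed

lemma eventually_iter_mode_iff:
  assumes "\<And>x. x \<in> C\<^sub>2 \<Longrightarrow> P x"
  shows "(\<exists>m. \<forall>ns. m \<le> length ns \<and> set ns \<subseteq> {0, -1} \<longrightarrow> P (iter_mode mode a ns a))
    \<longleftrightarrow> (\<forall>\<^sub>F t in sequentially. P (vpow a t))"
proof
  assume "\<exists>m. \<forall>ns. m \<le> length ns \<and> set ns \<subseteq> {0, -1} \<longrightarrow> P (iter_mode mode a ns a)"
  then obtain m where m: "\<And>ns. m \<le> length ns \<Longrightarrow> set ns \<subseteq> {0, -1} \<Longrightarrow> P (iter_mode mode a ns a)"
    by blast
  have "P (vpow a (Suc t))" if "m \<le> t" for t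
    using m[of "replicate t (-1)"] that by (simp add: iter_mode_replicate set_replicate_conv_if)
  then have "\<forall>\<^sub>F t in sequentially. P (vpow a (Suc t))"
    unfolding eventually_sequentially by blast
  then show "\<forall>\<^sub>F t in sequentially. P (vpow a t)"
    using eventually_sequentially_Suc[of "\<lambda>t. P (vpow a t)"] by simp
next
  assume "\<forall>\<^sub>F t in sequentially. P (vpow a t)"
  then obtain m where m: "\<And>t. m \<le> t \<Longrightarrow> P (vpow a t)" by (auto simp: eventually_sequentially)
  have "P (iter_mode mode a ns a)" if "m \<le> length ns" "set ns \<subseteq> {0, -1}" for ns
  proof (cases "0 \<in> set ns")
    case True
    then show ?thesis using that(2) by (intro assms iter_mode_in_C2)
  next
    case False
    with that(2) have "replicate (length ns) (-1) = ns" by (auto intro!: replicate_length_same)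
    then show ?thesis using m[of "Suc (length ns)"] that(1) iter_mode_replicate by (metis le_SucI)
  qed
  then show "\<exists>m. \<forall>ns. m \<le> length ns \<and> set ns \<subseteq> {0, -1} \<longrightarrow> P (iter_mode mode a ns a)" by blast
qed

lemma coset_mode_zero_vpow:
  "coset C\<^sub>2 (mode b 0 (vpow a (Suc t)))
    = coset C\<^sub>2 (scale (of_nat (Suc t)) (mode (mode b 0 a) (-1) (vpow a t)))"
proof (induction t)
  case 0
  then show ?case by simp
next
  case (Suc t)
  let ?x = "mode b 0 a"
  have "coset C\<^sub>2 (mode a (-1) (mode b 0 (vpow a (Suc t))))
      = coset C\<^sub>2 (mode a (-1) (scale (of_nat (Suc t)) (mode ?x (-1) (vpow a t))))"
    by (rule coset_mode_right_cong[OF _ Suc.IH]) simp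
  also have "\<dots> = coset C\<^sub>2 (scale (of_nat (Suc t)) (mode ?x (-1) (vpow a (Suc t))))"
    unfolding mode_scale_right vpow_Suc
    by (intro coset_scale_cong subspace_C2 coset_mode_minus_one_left_commute)
  finally have step: "coset C\<^sub>2 (mode a (-1) (mode b 0 (vpow a (Suc t))))
      = coset C\<^sub>2 (scale (of_nat (Suc t)) (mode ?x (-1) (vpow a (Suc t))))" .
  have "mode b 0 (vpow a (Suc (Suc t)))
      = mode ?x (-1) (vpow a (Suc t)) + mode a (-1) (mode b 0 (vpow a (Suc t)))"
    by (simp only: vpow_Suc[of a "Suc t"] mode_zero_derivation)
  moreover have "scale (of_nat (Suc (Suc t))) (mode ?x (-1) (vpow a (Suc t)))
      = mode ?x (-1) (vpow a (Suc t)) + scale (of_nat (Suc t)) (mode ?x (-1) (vpow a (Suc t)))"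
    by (simp only: of_nat_Suc[of "Suc t"] scale_left_distrib scale_one)
  ultimately show ?case using step by (simp only:) (intro coset_add_cong subspace_C2 refl)
qed

lemma eventually_iter_mode_pair_iff:
  assumes "\<And>x. x \<in> C\<^sub>2 \<Longrightarrow> P 0 x \<and> P (-1) x"
  shows "(\<exists>m. \<forall>s ns. s \<in> {0, -1} \<and> m \<le> length ns \<and> set ns \<subseteq> {0, -1}
            \<longrightarrow> P s (iter_mode mode a ns a))
    \<longleftrightarrow> (\<forall>\<^sub>F t in sequentially. P 0 (vpow a t) \<and> P (-1) (vpow a t))"
proof -
  have "(\<forall>s ns. s \<in> {0, -1} \<and> m \<le> length ns \<and> set ns \<subseteq> {0, -1} \<longrightarrow> P s (iter_mode mode a ns a))
      \<longleftrightarrow> (\<forall>ns. m \<le> length ns \<and> set ns \<subseteq> {0, -1}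
            \<longrightarrow> P 0 (iter_mode mode a ns a) \<and> P (-1) (iter_mode mode a ns a))" for m
    by blast
  then show ?thesis using eventually_iter_mode_iff[of "\<lambda>x. P 0 x \<and> P (-1) x" a] assms by simp
qed

context
  fixes M :: "'v set"
  assumes subspace_M: "subspace M" and C2_subset_M: "C\<^sub>2 \<subseteq> M"
begin

lemma coset_eq_mem_M: "coset C\<^sub>2 x = coset C\<^sub>2 y \<Longrightarrow> y \<in> M \<Longrightarrow> x \<in> M"
  by (rule coset_eq_mem[OF subspace_C2 subspace_M C2_subset_M])

lemma r01_iff_eventually: "a \<in> r01 mode M \<longleftrightarrow> (\<forall>\<^sub>F t in sequentially. vpow a t \<in> M)"
  unfolding r01_def using eventually_iter_mode_iff[of "\<lambda>x. x \<in> M" a] C2_subset_M by auto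

lemma lsr01_iff_eventually:
  "a \<in> lsr01 mode M
    \<longleftrightarrow> (\<forall>b. \<forall>\<^sub>F t in sequentially. mode b 0 (vpow a t) \<in> M \<and> mode b (-1) (vpow a t) \<in> M)"
proof -
  have "mode b 0 x \<in> M \<and> mode b (-1) x \<in> M" if "x \<in> C\<^sub>2" for b x
    using mode_right_in_C2[OF _ that] C2_subset_M by auto
  then show ?thesis
    unfolding lsr01_def using eventually_iter_mode_pair_iff[where P = "\<lambda>s x. mode b s x \<in> M" for b]
    by simp
qed

lemma rsr01_iff_eventually:
  "a \<in> rsr01 mode M
    \<longleftrightarrow> (\<forall>w. \<forall>\<^sub>F t in sequentially. mode (vpow a t) 0 w \<in> M \<and> mode (vpow a t) (-1) w \<in> M)"
proof -
  have "mode x 0 w \<in> M \<and> mode x (-1) w \<in> M" if "x \<in> C\<^sub>2" for w x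
    using mode_left_in_C2[OF _ that] C2_subset_M by auto
  then show ?thesis
    unfolding rsr01_def using eventually_iter_mode_pair_iff[where P = "\<lambda>n x. mode x n w \<in> M" for w]
    by simp
qed

lemma sr01_eq_lsr01: "sr01 mode M = lsr01 mode M"
proof -
  have "a \<in> rsr01 mode M" if "a \<in> lsr01 mode M" for a
  proof -
    have "\<forall>\<^sub>F t in sequentially. mode (vpow a t) 0 w \<in> M \<and> mode (vpow a t) (-1) w \<in> M" for w
      using that unfolding lsr01_iff_eventually
    proof (elim allE eventually_mono conjE, intro conjI)
      fix t
      assume "mode w 0 (vpow a t) \<in> M" "mode w (-1) (vpow a t) \<in> M"
      then show "mode (vpow a t) 0 w \<in> M" "mode (vpow a t) (-1) w \<in> M"
        using coset_eq_mem_M[OF coset_mode_zero_skew]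
          coset_eq_mem_M[OF coset_mode_minus_one_commute]
          subspace_neg[OF subspace_M] by blast+
    qed
    then show ?thesis by (simp add: rsr01_iff_eventually)
  qed
  then show ?thesis unfolding sr01_def by blast
qed

lemma lsr01_iff_eventually_product:
  "a \<in> lsr01 mode M
    \<longleftrightarrow> (\<forall>b c. \<forall>\<^sub>F t in sequentially. mode (mode b (-1) (vpow a t)) (-1) c \<in> M)"
proof
  assume "a \<in> lsr01 mode M"
  show "\<forall>b c. \<forall>\<^sub>F t in sequentially. mode (mode b (-1) (vpow a t)) (-1) c \<in> M"
  proof (intro allI)
    fix b c
    have "\<forall>\<^sub>F t in sequentially. mode (mode b (-1) c) (-1) (vpow a t) \<in> M"
      using \<open>a \<in> lsr01 mode M\<close> unfolding lsr01_iff_eventually by (auto elim: eventually_mono)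
    then show "\<forall>\<^sub>F t in sequentially. mode (mode b (-1) (vpow a t)) (-1) c \<in> M"
      by (rule eventually_mono) (rule coset_eq_mem_M[OF coset_mode_minus_one_right_commute])
  qed
next
  assume product: "\<forall>b c. \<forall>\<^sub>F t in sequentially. mode (mode b (-1) (vpow a t)) (-1) c \<in> M"
  have minus_one: "\<forall>\<^sub>F t in sequentially. mode b (-1) (vpow a t) \<in> M" for b
    using product[rule_format, of b vac] by simp
  have "\<forall>\<^sub>F t in sequentially. mode b 0 (vpow a (Suc t)) \<in> M" for b
    using minus_one[of "mode b 0 a"]
    by (rule eventually_mono)
      (rule coset_eq_mem_M[OF coset_mode_zero_vpow subspace_scale[OF subspace_M]])
  then have "\<forall>\<^sub>F t in sequentially. mode b 0 (vpow a t) \<in> M" for b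
    using eventually_sequentially_Suc[of "\<lambda>t. mode b 0 (vpow a t) \<in> M"] by simp
  then show "a \<in> lsr01 mode M"
    using minus_one by (simp add: lsr01_iff_eventually eventually_conj_iff)
qed

lemma r01_iff_alg_r:
  "a \<in> r01 mode M
    \<longleftrightarrow> coset C\<^sub>2 a \<in> alg_r (quot C\<^sub>2) (quot_mul mode C\<^sub>2) (coset C\<^sub>2 vac) (coset C\<^sub>2 ` M)"
  unfolding r01_iff_eventually alg_r_def quot_def
  by (simp add: alg_pow_coset coset_mem_image_iff[OF subspace_C2 subspace_M C2_subset_M]
      eventually_sequentially_ge_1)

lemma sr01_iff_alg_sr:
  "a \<in> sr01 mode M
    \<longleftrightarrow> coset C\<^sub>2 a \<in> alg_sr (quot C\<^sub>2) (quot_mul mode C\<^sub>2) (coset C\<^sub>2 vac) (coset C\<^sub>2 ` M)"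
  unfolding sr01_eq_lsr01 lsr01_iff_eventually_product alg_sr_def quot_def
  by (simp add: alg_pow_coset quot_mul_coset eventually_sequentially_ge_1
      coset_mem_image_iff[OF subspace_C2 subspace_M C2_subset_M])

end

end

theorem mainTheorem1:
  fixes scale :: "complex \<Rightarrow> 'v::ab_group_add \<Rightarrow> 'v"
    and mode :: "'v \<Rightarrow> int \<Rightarrow> 'v \<Rightarrow> 'v"
    and vac :: 'v
    and M :: "'v set"
    and a :: 'v
  assumes VA: "is_vertex_algebra scale mode vac"
    and sub: "module.subspace scale M"
    and C2M: "C2 scale mode \<subseteq> M"
  shows "(a \<in> r01 mode M \<longleftrightarrow>
            coset (C2 scale mode) a
              \<in> alg_r (quot (C2 scale mode)) (quot_mul mode (C2 scale mode))
                      (coset (C2 scale mode) vac) (coset (C2 scale mode) ` M))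
       \<and> (a \<in> sr01 mode M \<longleftrightarrow>
            coset (C2 scale mode) a
              \<in> alg_sr (quot (C2 scale mode)) (quot_mul mode (C2 scale mode))
                      (coset (C2 scale mode) vac) (coset (C2 scale mode) ` M))
       \<and> (MZ01_subspace mode M \<longleftrightarrow>
            MZ_subspace (quot (C2 scale mode)) (quot_mul mode (C2 scale mode))
                        (coset (C2 scale mode) vac) (coset (C2 scale mode) ` M))"
proof -
  interpret vertex_algebra scale mode vac by (rule vertex_algebra.intro) (rule VA)
  let ?R = "alg_r (quot C\<^sub>2) (quot_mul mode C\<^sub>2) (coset C\<^sub>2 vac) (coset C\<^sub>2 ` M)"
  let ?S = "alg_sr (quot C\<^sub>2) (quot_mul mode C\<^sub>2) (coset C\<^sub>2 vac) (coset C\<^sub>2 ` M)"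
  have "r01 mode M = coset C\<^sub>2 -` ?R" "sr01 mode M = coset C\<^sub>2 -` ?S"
    using r01_iff_alg_r[OF sub C2M] sr01_iff_alg_sr[OF sub C2M] by auto
  moreover have "?R \<subseteq> range (coset C\<^sub>2)" "?S \<subseteq> range (coset C\<^sub>2)"
    by (auto simp: alg_r_def alg_sr_def quot_def)
  ultimately have "MZ01_subspace mode M \<longleftrightarrow> ?R = ?S"
    unfolding MZ01_subspace_def by (metis image_vimage_eq inf.absorb1)
  then show ?thesis
    using r01_iff_alg_r[OF sub C2M] sr01_iff_alg_sr[OF sub C2M] by (simp add: MZ_subspace_def)
qed

end
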